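(* Let $P\subset\mathbb R^n$ be an $n$-dimensional strongly monotypic polytope, and let $X_1,\dots,X_k$ be pairwise disjoint subsets of $N(P)$ such that (i) each $X_i$ is the vertex set of a simplex whose relative interior contains $0$, (ii) the linear spaces $\operatorname{span}X_1,\dots,\operatorname{span}X_k$ are linearly independent, and (iii) $\operatorname{span} X_1\oplus\cdots\oplus\operatorname{span} X_k=\mathbb R^n$. Then there exists a set $V\subset\mathbb R^n$ of $|X_1|\cdots|X_k|$ vectors such that for every point $x$ on the boundary of $P$ there is a vector $v\in V$ with $x-v$ in the interior of $P$. In particular, since $|X_1|\cdots|X_k|\le 2^n$, Hadwiger's conjecture holds for $P$: $P$ can be covered by at most $2^n$ translates of $(1-\epsilon)P$ for some $\epsilon>0$.
   Context: For a polytope $P$, $N(P)$ denotes the set of outer unit normal vectors of the facets of $P$. A polytope $P$ is called strongly monotypic if for every polytope $Q$ with $N(Q)=N(P)$, the arrangement of the hyperplanes containing the facets of $P$ and the arrangement of the hyperplanes containing the facets of $Q$ are combinatorially equivalent. (Such subsets $X_1,\dots,X_k$ always exist for a strongly monotypic polytope.) *)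

theory Defs
  imports "HOL-Analysis.Analysis"
begin

definition facet_normals :: "'a::euclidean_space set \<Rightarrow> 'a set" where
  "facet_normals P = {u. norm u = 1 \<and>
     (\<exists>F b. F facet_of P \<and> P \<subseteq> {x. u \<bullet> x \<le> b} \<and> F \<subseteq> {x. u \<bullet> x = b})}"

definition support_fun :: "'a::euclidean_space set \<Rightarrow> 'a \<Rightarrow> real" where
  "support_fun P u = (SUP x\<in>P. u \<bullet> x)"

text \<open>The hyperplane arrangement of the facet hyperplanes
  {x. u \<bullet> x = h_P(u)}, u \<in> N(P), encoded by its set of realised
  (oriented) sign vectors; the faces of the arrangement are exactly the
  nonempty sets of points with a common sign vector.\<close>
definition arrangement_signs :: "'a::euclidean_space set \<Rightarrow> ('a \<Rightarrow> real) set" where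
  "arrangement_signs P =
     (\<lambda>x. \<lambda>u. if u \<in> facet_normals P then sgn (u \<bullet> x - support_fun P u) else 0) ` UNIV"

text \<open>Combinatorial equivalence of the facet-hyperplane arrangements of P and Q
  (N(P) = N(Q)), the hyperplanes being matched via their common normal vectors:
  the face posets coincide, i.e. the sets of realised sign vectors are equal.\<close>
definition arrangement_comb_equiv :: "'a::euclidean_space set \<Rightarrow> 'a set \<Rightarrow> bool" where
  "arrangement_comb_equiv P Q \<longleftrightarrow> arrangement_signs P = arrangement_signs Q"

definition strongly_monotypic :: "'a::euclidean_space set \<Rightarrow> bool" where
  "strongly_monotypic P \<longleftrightarrow> polytope P \<and>
     (\<forall>Q. polytope Q \<and> facet_normals Q = facet_normals P \<longrightarrow> arrangement_comb_equiv P Q)"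

end

theory Submission
  imports Defs
begin

text \<open>Let R be the polar of the convex hull of the union of the X i. It is a product of
  simplices, and its vertices r \<sigma> are indexed by the choices \<sigma> of one vertex \<sigma> i \<in> X i from
  every simplex: u \<bullet> r \<sigma> = 1 for all the other vertices u, which form a basis.
  For large s the polytope P + s R has the same facet normals as P, so by strong monotypy
  every x \<in> P has a counterpart y in the arrangement of P + s R with the same sign vector.
  Then z = (y - x) / s lies almost in R and on the face of R exposed by the facet normals
  active at x. Choosing \<sigma> i with \<sigma> i \<bullet> z \<le> 0 in every simplex, z is almost a convex
  combination of r \<sigma> and a point of R, so r \<sigma> lies almost on that face too: w \<bullet> r \<sigma> \<ge> 1/4
  for every facet normal w active at x. Hence x - t r \<sigma> is interior to P for small t > 0,
  uniformly in x by compactness, and the t r \<sigma> form the required set. The count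
  \<Prod>i. card (X i) \<le> 2 ^ n follows from \<Sum>i. (card (X i) - 1) \<le> n.\<close>

lemma support_fun_upper:
  fixes S :: "'a::euclidean_space set"
  assumes "bounded S" "x \<in> S"
  shows "w \<bullet> x \<le> support_fun S w"
proof -
  have "bdd_above ((\<lambda>x. x \<bullet> w) ` S)"
    using assms(1) by (rule bounded_inner_imp_bdd_above)
  then have "bdd_above ((\<lambda>x. w \<bullet> x) ` S)"
    by (simp add: inner_commute)
  then show ?thesis
    unfolding support_fun_def using assms(2) by (rule cSUP_upper2) simp
qed

lemma support_fun_least:
  fixes S :: "'a::euclidean_space set"
  assumes "S \<noteq> {}" "\<And>x. x \<in> S \<Longrightarrow> w \<bullet> x \<le> c"
  shows "support_fun S w \<le> c"
  unfolding support_fun_def using assms by (intro cSUP_least) auto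

lemma support_fun_eq_max:
  fixes S :: "'a::euclidean_space set"
  assumes "x \<in> S" "\<And>y. y \<in> S \<Longrightarrow> w \<bullet> y \<le> w \<bullet> x"
  shows "support_fun S w = w \<bullet> x"
  unfolding support_fun_def by (rule cSup_eq_maximum) (use assms in auto)

lemma support_fun_attained:
  fixes S :: "'a::euclidean_space set"
  assumes "compact S" "S \<noteq> {}"
  obtains z where "z \<in> S" "w \<bullet> z = support_fun S w"
proof -
  have "continuous_on S (\<lambda>y. w \<bullet> y)"
    by (intro continuous_intros)
  then obtain z where "z \<in> S" "\<forall>y\<in>S. w \<bullet> y \<le> w \<bullet> z"
    using continuous_attains_sup[OF assms] by blast
  then show ?thesis
    using that support_fun_eq_max by metis
qed

lemma unit_normals_of_same_hyperplane:
  fixes u v :: "'a::euclidean_space"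
  assumes same: "{x. u \<bullet> x = c} = {x. v \<bullet> x = d}" and x0: "u \<bullet> x0 = c"
    and u: "norm u = 1" and v: "norm v = 1"
  shows "v = u \<or> v = - u"
proof -
  have uu: "u \<bullet> u = 1"
    using u by (simp add: norm_eq_1)
  define e where "e = v - (v \<bullet> u) *\<^sub>R u"
  have "u \<bullet> e = 0"
    unfolding e_def using uu by (simp add: inner_diff_right inner_commute)
  then have "x0 + e \<in> {x. u \<bullet> x = c}" "x0 \<in> {x. u \<bullet> x = c}"
    using x0 by (auto simp: inner_add_right)
  then have "x0 + e \<in> {x. v \<bullet> x = d}" "x0 \<in> {x. v \<bullet> x = d}"
    using same by blast+
  then have "v \<bullet> e = 0"
    by (auto simp: inner_add_right)
  then have "e \<bullet> e = 0"
    using \<open>u \<bullet> e = 0\<close> unfolding e_def by (simp add: inner_diff_left)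
  then have vu: "v = (v \<bullet> u) *\<^sub>R u"
    unfolding e_def by simp
  then have "\<bar>v \<bullet> u\<bar> = 1"
    using u v by (metis mult.right_neutral norm_scaleR real_norm_def)
  then show ?thesis
    using vu by (auto simp: abs_if split: if_splits)
qed

lemma facet_normal_unique:
  fixes S C :: "'a::euclidean_space set"
  assumes int: "interior S \<noteq> {}" and CS: "C \<subseteq> S" and dim: "aff_dim C = int DIM('a) - 1"
    and Su: "S \<subseteq> {x. u \<bullet> x \<le> c}" and Cu: "C \<subseteq> {x. u \<bullet> x = c}" and u: "norm u = 1"
    and Sv: "S \<subseteq> {x. v \<bullet> x \<le> d}" and Cv: "C \<subseteq> {x. v \<bullet> x = d}" and v: "norm v = 1"
  shows "u = v"
proof -
  have "C \<noteq> {}"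
    using dim by (auto simp: DIM_positive)
  then obtain x0 where x0: "x0 \<in> C"
    by blast
  have hull_eq: "affine hull C = {x. a \<bullet> x = b}"
    if "a \<noteq> 0" "C \<subseteq> {x. a \<bullet> x = b}" for a b
    by (rule affine_dim_equal) (use that \<open>C \<noteq> {}\<close> dim in \<open>auto simp: affine_hyperplane hull_minimal\<close>)
  have "u \<noteq> 0" "v \<noteq> 0"
    using u v by auto
  then have "{x. u \<bullet> x = c} = {x. v \<bullet> x = d}"
    using hull_eq[OF _ Cu] hull_eq[OF _ Cv] by simp
  then have "v = u \<or> v = - u"
    using unit_normals_of_same_hyperplane x0 Cu u v by blast
  moreover have "v \<noteq> - u"
  proof
    assume "v = - u"
    then have "S \<subseteq> {x. u \<bullet> x = c}"
      using Su Sv x0 Cu Cv by fastforce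
    then show False
      using int interior_mono interior_hyperplane \<open>u \<noteq> 0\<close> by (metis subset_empty)
  qed
  ultimately show ?thesis
    by auto
qed

lemma facet_normalsI:
  assumes "norm u = 1" "F facet_of P" "P \<subseteq> {x. u \<bullet> x \<le> b}" "F \<subseteq> {x. u \<bullet> x = b}"
  shows "u \<in> facet_normals P"
  unfolding facet_normals_def using assms by blast

lemma norm_facet_normal: "w \<in> facet_normals P \<Longrightarrow> norm w = 1"
  unfolding facet_normals_def by blast

lemma facet_normal_supporting:
  fixes P :: "'a::euclidean_space set"
  assumes "bounded P" "w \<in> facet_normals P"
  obtains F where "F facet_of P" "F \<subseteq> {x. w \<bullet> x = support_fun P w}"
proof -
  obtain F c where F: "F facet_of P" and Pc: "P \<subseteq> {x. w \<bullet> x \<le> c}" and Fc: "F \<subseteq> {x. w \<bullet> x = c}"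
    using assms(2) unfolding facet_normals_def by blast
  obtain f where f: "f \<in> F"
    using F unfolding facet_of_def by blast
  have "f \<in> P"
    using F f facet_of_imp_subset by blast
  then have "support_fun P w = c"
    using support_fun_least[of P w c] support_fun_upper[OF assms(1) \<open>f \<in> P\<close>, of w] Pc Fc f
    by fastforce
  then show ?thesis
    using that F Fc Pc by blast
qed

lemma interior_full_dim_polytope:
  fixes P :: "'a::euclidean_space set"
  assumes "polytope P" "aff_dim P = int DIM('a)"
  shows "interior P \<noteq> {}"
proof -
  have "P \<noteq> {}"
    using assms(2) by (auto simp: DIM_positive)
  then have "rel_interior P \<noteq> {}"
    using assms(1) polytope_imp_convex rel_interior_eq_empty by blast
  then show ?thesis
    using assms(2) aff_dim_eq_full rel_interior_interior by metis
qed

lemma finite_facet_normals: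
  fixes P :: "'a::euclidean_space set"
  assumes P: "polytope P" "aff_dim P = int DIM('a)"
  shows "finite (facet_normals P)"
proof -
  have "\<forall>w\<in>facet_normals P. \<exists>F. F facet_of P \<and> F \<subseteq> {x. w \<bullet> x = support_fun P w}"
    using facet_normal_supporting polytope_imp_bounded[OF P(1)] by metis
  then obtain F where F: "\<And>w. w \<in> facet_normals P \<Longrightarrow>
      F w facet_of P \<and> F w \<subseteq> {x. w \<bullet> x = support_fun P w}"
    by metis
  have "inj_on F (facet_normals P)"
  proof (rule inj_onI)
    fix u v assume uv: "u \<in> facet_normals P" "v \<in> facet_normals P" "F u = F v"
    have dim: "aff_dim (F u) = int DIM('a) - 1"
      using F[OF uv(1)] P(2) unfolding facet_of_def by simp
    have supp: "P \<subseteq> {x. w \<bullet> x \<le> support_fun P w}" for w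
      using support_fun_upper[OF polytope_imp_bounded[OF P(1)]] by blast
    have unit: "norm u = 1" "norm v = 1"
      using uv(1,2) by (simp_all add: norm_facet_normal)
    show "u = v"
      using facet_normal_unique[OF interior_full_dim_polytope[OF P] facet_of_imp_subset dim supp _ unit(1)
          supp _ unit(2)] F[OF uv(1)] F[OF uv(2)] uv(3)
      by simp
  qed
  moreover have "F ` facet_normals P \<subseteq> {F. F facet_of P}"
    using F by blast
  ultimately show ?thesis
    using finite_polytope_facets[OF P(1)] finite_imageD finite_subset by metis
qed

lemma facet_normal_of_facet_halfspace:
  fixes P :: "'a::euclidean_space set"
  assumes "P \<noteq> {}" "a \<noteq> 0" "P \<subseteq> {x. a \<bullet> x \<le> b}" "(P \<inter> {x. a \<bullet> x = b}) facet_of P"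
  shows "(1 / norm a) *\<^sub>R a \<in> facet_normals P" "support_fun P ((1 / norm a) *\<^sub>R a) \<le> b / norm a"
proof -
  have n: "0 < norm a"
    using assms(2) by simp
  have Pw: "P \<subseteq> {x. ((1 / norm a) *\<^sub>R a) \<bullet> x \<le> b / norm a}"
    using assms(3) n by (auto simp: field_simps)
  moreover have "P \<inter> {x. a \<bullet> x = b} \<subseteq> {x. ((1 / norm a) *\<^sub>R a) \<bullet> x = b / norm a}"
    using n by (auto simp: field_simps)
  moreover have "norm ((1 / norm a) *\<^sub>R a) = 1"
    using n by simp
  ultimately show "(1 / norm a) *\<^sub>R a \<in> facet_normals P"
    using facet_normalsI assms(4) by blast
  show "support_fun P ((1 / norm a) *\<^sub>R a) \<le> b / norm a"
    using Pw by (intro support_fun_least[OF assms(1)]) auto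
qed

lemma polytope_eq_facet_halfspaces:
  fixes P :: "'a::euclidean_space set"
  assumes P: "polytope P" "aff_dim P = int DIM('a)"
  shows "P = {y. \<forall>w\<in>facet_normals P. w \<bullet> y \<le> support_fun P w}"
proof
  show "P \<subseteq> {y. \<forall>w\<in>facet_normals P. w \<bullet> y \<le> support_fun P w}"
    using support_fun_upper polytope_imp_bounded[OF P(1)] by blast
  have Pne: "P \<noteq> {}"
    using P(2) by (auto simp: DIM_positive)
  obtain \<H> where fin: "finite \<H>" and seq: "P = affine hull P \<inter> \<Inter>\<H>"
    and hs: "\<And>h. h \<in> \<H> \<Longrightarrow> \<exists>a b. a \<noteq> 0 \<and> h = {x. a \<bullet> x \<le> b}"
    and min: "\<And>\<H>'. \<H>' \<subset> \<H> \<Longrightarrow> P \<subset> affine hull P \<inter> \<Inter>\<H>'"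
    using polytope_imp_polyhedron[OF P(1)] by (simp add: polyhedron_Int_affine_minimal) meson
  obtain a b where ab: "\<And>h. h \<in> \<H> \<Longrightarrow> a h \<noteq> 0 \<and> h = {x. a h \<bullet> x \<le> b h}"
    using hs by metis
  show "{y. \<forall>w\<in>facet_normals P. w \<bullet> y \<le> support_fun P w} \<subseteq> P"
  proof
    fix y assume y: "y \<in> {y. \<forall>w\<in>facet_normals P. w \<bullet> y \<le> support_fun P w}"
    have "y \<in> h" if h: "h \<in> \<H>" for h
    proof -
      let ?w = "(1 / norm (a h)) *\<^sub>R a h"
      have "P \<subseteq> {x. a h \<bullet> x \<le> b h}"
        using h seq ab[OF h] by blast
      moreover have "(P \<inter> {x. a h \<bullet> x = b h}) facet_of P"
        using facet_of_polyhedron_explicit[OF fin seq ab min] h by blast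
      ultimately have "?w \<in> facet_normals P" "support_fun P ?w \<le> b h / norm (a h)"
        using facet_normal_of_facet_halfspace[OF Pne] ab[OF h] by blast+
      then have "?w \<bullet> y \<le> b h / norm (a h)"
        using y by force
      then have "a h \<bullet> y \<le> b h"
        using ab[OF h] by (simp add: field_simps)
      then show ?thesis
        using ab[OF h] by blast
    qed
    then show "y \<in> P"
      using seq P(2) aff_dim_eq_full by blast
  qed
qed

lemma facet_of_supporting_hyperplane:
  fixes Q F :: "'a::euclidean_space set"
  assumes cvx: "convex Q" and dQ: "aff_dim Q = int DIM('a)" and Q: "Q \<subseteq> {y. w \<bullet> y \<le> \<beta>}"
    and "w \<noteq> 0" and F: "F \<subseteq> Q \<inter> {y. w \<bullet> y = \<beta>}" and dF: "aff_dim F = int DIM('a) - 1"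
  shows "(Q \<inter> {y. w \<bullet> y = \<beta>}) facet_of Q"
proof -
  have "F \<noteq> {}"
    using dF by (auto simp: DIM_positive)
  have "aff_dim F \<le> aff_dim (Q \<inter> {y. w \<bullet> y = \<beta>})"
    using F by (intro aff_dim_subset)
  moreover have "aff_dim (Q \<inter> {y. w \<bullet> y = \<beta>}) \<le> aff_dim {y. w \<bullet> y = \<beta>}"
    by (intro aff_dim_subset) auto
  moreover have "aff_dim {y. w \<bullet> y = \<beta>} = int (DIM('a) - 1)"
    using \<open>w \<noteq> 0\<close> by (rule aff_dim_hyperplane)
  ultimately have "aff_dim (Q \<inter> {y. w \<bullet> y = \<beta>}) = aff_dim Q - 1"
    using dF dQ by (simp add: of_nat_diff)
  moreover have "(Q \<inter> {y. w \<bullet> y = \<beta>}) face_of Q"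
    using face_of_Int_supporting_hyperplane_le[OF cvx] Q by blast
  ultimately show ?thesis
    using \<open>F \<noteq> {}\<close> F unfolding facet_of_def by auto
qed

lemma facet_of_halfspaces_subset_hyperplane:
  fixes N :: "'a::euclidean_space set" and b :: "'a \<Rightarrow> real"
  defines "Q \<equiv> {y. \<forall>w\<in>N. w \<bullet> y \<le> b w}"
  assumes fin: "finite N" and F: "F facet_of Q"
  obtains w where "w \<in> N" "F \<subseteq> {y. w \<bullet> y = b w}"
proof -
  have le: "w \<bullet> y \<le> b w" if "w \<in> N" "y \<in> Q" for w y
    using that unfolding Q_def by blast
  have FQ: "F \<subseteq> Q"
    using F facet_of_imp_subset by blast
  have "convex F"
    using F facet_of_imp_face_of face_of_imp_convex by blast
  moreover have "F \<noteq> {}"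
    using F unfolding facet_of_def by blast
  ultimately obtain x0 where x0: "x0 \<in> rel_interior F"
    using rel_interior_eq_empty by blast
  have x0F: "x0 \<in> F"
    using x0 rel_interior_subset by blast
  \<comment> \<open>A point at which no constraint is active is interior, so it cannot lie on a facet.\<close>
  have "\<exists>w\<in>N. w \<bullet> x0 = b w"
  proof (rule ccontr)
    assume none: "\<not> (\<exists>w\<in>N. w \<bullet> x0 = b w)"
    have "w \<bullet> x0 < b w" if "w \<in> N" for w
      using le[OF that] FQ x0F none that by (meson less_le subsetD)
    then have "x0 \<in> (\<Inter>w\<in>N. {y. w \<bullet> y < b w})"
      by blast
    moreover have "open (\<Inter>w\<in>N. {y. w \<bullet> y < b w})"
      using fin by (intro open_INT) (auto simp: open_halfspace_lt)
    moreover have "(\<Inter>w\<in>N. {y. w \<bullet> y < b w}) \<subseteq> Q"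
      unfolding Q_def by (auto intro: less_imp_le)
    ultimately have "x0 \<in> interior Q"
      using interior_maximal by blast
    moreover have "F \<noteq> Q"
      using F unfolding facet_of_def by auto
    ultimately show False
      using face_of_disjoint_interior[OF facet_of_imp_face_of[OF F]] x0F by blast
  qed
  then obtain w where w: "w \<in> N" "w \<bullet> x0 = b w"
    by blast
  have "Q = (\<Inter>w\<in>N. {y. w \<bullet> y \<le> b w})"
    unfolding Q_def by auto
  then have "convex Q"
    by (simp add: convex_INT convex_halfspace_le)
  then have "(Q \<inter> {y. w \<bullet> y = b w}) face_of Q"
    using face_of_Int_supporting_hyperplane_le le[OF w(1)] by blast
  moreover have "x0 \<in> (Q \<inter> {y. w \<bullet> y = b w}) \<inter> rel_interior F"
    using x0 x0F FQ w(2) by blast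
  ultimately have "F \<subseteq> Q \<inter> {y. w \<bullet> y = b w}"
    using subset_of_face_of FQ by blast
  then show ?thesis
    using that w(1) by blast
qed

lemma facet_normals_halfspaces_subset:
  fixes N :: "'a::euclidean_space set" and b :: "'a \<Rightarrow> real"
  defines "Q \<equiv> {y. \<forall>w\<in>N. w \<bullet> y \<le> b w}"
  assumes fin: "finite N" and unit: "\<forall>w\<in>N. norm w = 1" and int: "interior Q \<noteq> {}"
  shows "facet_normals Q \<subseteq> N"
proof
  fix u assume "u \<in> facet_normals Q"
  then obtain F c where u: "norm u = 1" and F: "F facet_of Q"
    and Qu: "Q \<subseteq> {x. u \<bullet> x \<le> c}" and Fu: "F \<subseteq> {x. u \<bullet> x = c}"
    unfolding facet_normals_def by blast
  obtain w where w: "w \<in> N" "F \<subseteq> {y. w \<bullet> y = b w}"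
    using facet_of_halfspaces_subset_hyperplane[OF fin F[unfolded Q_def]] by blast
  have "aff_dim F = int DIM('a) - 1"
    using F aff_dim_nonempty_interior[OF int] unfolding facet_of_def by simp
  moreover have "Q \<subseteq> {y. w \<bullet> y \<le> b w}"
    unfolding Q_def using w(1) by blast
  ultimately have "u = w"
    using facet_normal_unique[OF int facet_of_imp_subset[OF F] _ Qu Fu u _ w(2)] unit w(1) by blast
  then show "u \<in> N"
    using w by simp
qed

lemma halfspaces_facet_normals:
  fixes N :: "'a::euclidean_space set" and b :: "'a \<Rightarrow> real"
  defines "Q \<equiv> {y. \<forall>w\<in>N. w \<bullet> y \<le> b w}"
  assumes fin: "finite N" and unit: "\<forall>w\<in>N. norm w = 1" and bdd: "bounded Q"
    and int: "interior Q \<noteq> {}"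
    and fac: "\<forall>w\<in>N. \<exists>F. F \<subseteq> Q \<and> F \<subseteq> {y. w \<bullet> y = b w} \<and> aff_dim F = int DIM('a) - 1"
  shows "polytope Q" "facet_normals Q = N" "\<And>w. w \<in> N \<Longrightarrow> support_fun Q w = b w"
proof -
  have "Q = \<Inter>((\<lambda>w. {y. w \<bullet> y \<le> b w}) ` N)"
    unfolding Q_def by auto
  then have "polyhedron Q"
    using fin by (auto intro: polyhedron_Inter simp: polyhedron_halfspace_le)
  then show "polytope Q"
    using bdd by (simp add: polytope_eq_bounded_polyhedron)
  then have cvx: "convex Q"
    by (simp add: polytope_imp_convex)
  have dQ: "aff_dim Q = int DIM('a)"
    using int aff_dim_nonempty_interior by blast
  have le: "w \<bullet> y \<le> b w" if "w \<in> N" "y \<in> Q" for w y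
    using that unfolding Q_def by blast
  have facet: "(Q \<inter> {y. w \<bullet> y = b w}) facet_of Q" and touch: "\<exists>y\<in>Q. w \<bullet> y = b w"
    if w: "w \<in> N" for w
  proof -
    obtain F where F: "F \<subseteq> Q" "F \<subseteq> {y. w \<bullet> y = b w}" "aff_dim F = int DIM('a) - 1"
      using fac[rule_format, OF w] by blast
    moreover have "F \<noteq> {}"
      using F(3) by (auto simp: DIM_positive)
    ultimately show "\<exists>y\<in>Q. w \<bullet> y = b w"
      by blast
    have "w \<noteq> 0"
      using unit[rule_format, OF w] by auto
    then show "(Q \<inter> {y. w \<bullet> y = b w}) facet_of Q"
      using facet_of_supporting_hyperplane[OF cvx dQ _ _ _ F(3)] le[OF w] F(1,2) by blast
  qed
  show "support_fun Q w = b w" if w: "w \<in> N" for w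
  proof -
    obtain y where y: "y \<in> Q" "w \<bullet> y = b w"
      using touch[OF w] by blast
    have "support_fun Q w = w \<bullet> y"
      by (rule support_fun_eq_max) (use y le[OF w] in auto)
    then show ?thesis
      using y by simp
  qed
  show "facet_normals Q = N"
  proof
    show "N \<subseteq> facet_normals Q"
    proof
      fix w assume w: "w \<in> N"
      have "Q \<subseteq> {x. w \<bullet> x \<le> b w}" "Q \<inter> {y. w \<bullet> y = b w} \<subseteq> {x. w \<bullet> x = b w}"
        using le[OF w] by auto
      then show "w \<in> facet_normals Q"
        using facet_normalsI[OF unit[rule_format, OF w] facet[OF w]] by blast
    qed
  next
    show "facet_normals Q \<subseteq> N"
      using facet_normals_halfspaces_subset[OF fin unit int[unfolded Q_def]] unfolding Q_def .
  qed
qed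

lemma strongly_monotypic_same_signs:
  assumes "strongly_monotypic P" "polytope Q" "facet_normals Q = facet_normals P"
  obtains y where "\<And>w. w \<in> facet_normals P \<Longrightarrow>
    sgn (w \<bullet> y - support_fun Q w) = sgn (w \<bullet> x - support_fun P w)"
proof -
  define signs where "signs S z = (\<lambda>u. if u \<in> facet_normals S then sgn (u \<bullet> z - support_fun S u) else 0)"
    for S :: "'a set" and z
  have "arrangement_signs P = arrangement_signs Q"
    using assms unfolding strongly_monotypic_def arrangement_comb_equiv_def by blast
  then have "signs P x \<in> range (signs Q)"
    unfolding arrangement_signs_def signs_def by blast
  then obtain y where eq: "signs P x = signs Q y"
    by blast
  have "sgn (w \<bullet> y - support_fun Q w) = sgn (w \<bullet> x - support_fun P w)"
    if "w \<in> facet_normals P" for w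
    using fun_cong[OF eq, of w] that assms(3) unfolding signs_def by simp
  then show ?thesis
    by (rule that)
qed

lemma inner_add_scaled_le_support_fun:
  fixes P R :: "'a::euclidean_space set"
  assumes "bounded P" "bounded R" "p \<in> P" "r \<in> R" "0 \<le> s"
  shows "w \<bullet> (p + s *\<^sub>R r) \<le> support_fun P w + s * support_fun R w"
proof -
  have "w \<bullet> p + s * (w \<bullet> r) \<le> support_fun P w + s * support_fun R w"
  proof (rule add_mono)
    show "w \<bullet> p \<le> support_fun P w"
      by (rule support_fun_upper[OF assms(1,3)])
    show "s * (w \<bullet> r) \<le> s * support_fun R w"
      using support_fun_upper[OF assms(2,4)] assms(5) by (rule mult_left_mono)
  qed
  then show ?thesis
    by (simp add: inner_add_right)
qed

lemma facet_normals_enlargement: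
  fixes P R :: "'a::euclidean_space set" and s :: real
  defines "Q \<equiv> {y. \<forall>w\<in>facet_normals P. w \<bullet> y \<le> support_fun P w + s * support_fun R w}"
  assumes P: "polytope P" "aff_dim P = int DIM('a)" and R: "compact R" "R \<noteq> {}"
    and "0 \<le> s" and "bounded Q"
  shows "polytope Q" "facet_normals Q = facet_normals P"
    "\<And>w. w \<in> facet_normals P \<Longrightarrow> support_fun Q w = support_fun P w + s * support_fun R w"
proof -
  have sum_in: "p + s *\<^sub>R r \<in> Q" if "p \<in> P" "r \<in> R" for p r
    unfolding Q_def using inner_add_scaled_le_support_fun polytope_imp_bounded[OF P(1)]
      compact_imp_bounded[OF R(1)] that \<open>0 \<le> s\<close> by blast
  obtain r0 where "r0 \<in> R"
    using R(2) by blast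
  have "interior ((+) (s *\<^sub>R r0) ` P) \<subseteq> interior Q"
  proof (rule interior_mono, rule image_subsetI)
    show "s *\<^sub>R r0 + p \<in> Q" if "p \<in> P" for p
      using sum_in[OF that \<open>r0 \<in> R\<close>] by (simp add: add.commute)
  qed
  moreover have "interior ((+) (s *\<^sub>R r0) ` P) \<noteq> {}"
    using interior_full_dim_polytope[OF P] by (simp add: interior_translation)
  ultimately have int: "interior Q \<noteq> {}"
    by blast
  \<comment> \<open>Translating the facet of P with normal w by s r, for r \<in> R maximising w, gives a facet of Q.\<close>
  have fac: "\<forall>w\<in>facet_normals P. \<exists>F. F \<subseteq> Q \<and>
      F \<subseteq> {y. w \<bullet> y = support_fun P w + s * support_fun R w} \<and> aff_dim F = int DIM('a) - 1"
  proof
    fix w assume w: "w \<in> facet_normals P"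
    obtain F where F: "F facet_of P" "F \<subseteq> {x. w \<bullet> x = support_fun P w}"
      by (rule facet_normal_supporting[OF polytope_imp_bounded[OF P(1)] w])
    obtain r where r: "r \<in> R" "w \<bullet> r = support_fun R w"
      by (rule support_fun_attained[OF R])
    have "(+) (s *\<^sub>R r) ` F \<subseteq> Q"
    proof (rule image_subsetI)
      show "s *\<^sub>R r + f \<in> Q" if "f \<in> F" for f
        using sum_in[OF _ r(1), of f] facet_of_imp_subset[OF F(1)] that by (simp add: add.commute subset_iff)
    qed
    moreover have "(+) (s *\<^sub>R r) ` F \<subseteq> {y. w \<bullet> y = support_fun P w + s * support_fun R w}"
      using F(2) r(2) by (auto simp: inner_add_right)
    moreover have "aff_dim ((+) (s *\<^sub>R r) ` F) = int DIM('a) - 1"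
      using F(1) P(2) unfolding facet_of_def by (simp add: aff_dim_translation_eq)
    ultimately show "\<exists>F. F \<subseteq> Q \<and>
      F \<subseteq> {y. w \<bullet> y = support_fun P w + s * support_fun R w} \<and> aff_dim F = int DIM('a) - 1"
      by (intro exI conjI)
  qed
  have unit: "\<forall>w\<in>facet_normals P. norm w = 1"
    using norm_facet_normal by blast
  note H = halfspaces_facet_normals[where N="facet_normals P"
      and b="\<lambda>w. support_fun P w + s * support_fun R w", folded Q_def,
      OF finite_facet_normals[OF P] unit \<open>bounded Q\<close> int fac]
  show "polytope Q"
    by (fact H(1))
  show "facet_normals Q = facet_normals P"
    by (fact H(2))
  show "\<And>w. w \<in> facet_normals P \<Longrightarrow> support_fun Q w = support_fun P w + s * support_fun R w"
    by (fact H(3))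
qed

lemma simplex_zero_barycentric:
  fixes X :: "'a::euclidean_space set"
  assumes "\<not> affine_dependent X" "0 \<in> rel_interior (convex hull X)"
  obtains l where "\<And>u. u \<in> X \<Longrightarrow> 0 < l u" "sum l X = 1" "(\<Sum>u\<in>X. l u *\<^sub>R u) = 0"
  using assms rel_interior_convex_hull_explicit[OF assms(1)] by auto

lemma simplex_independent_Diff:
  fixes X :: "'a::euclidean_space set"
  assumes aff: "\<not> affine_dependent X" and zero: "0 \<in> rel_interior (convex hull X)" and a: "a \<in> X"
  shows "independent (X - {a})"
proof
  have fin: "finite X"
    using aff aff_independent_finite by blast
  obtain l where l: "\<And>u. u \<in> X \<Longrightarrow> 0 < l u" "sum l X = 1" "(\<Sum>u\<in>X. l u *\<^sub>R u) = 0"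
    using simplex_zero_barycentric[OF aff zero] by blast
  assume "dependent (X - {a})"
  then obtain c where c: "\<exists>v\<in>X - {a}. c v \<noteq> 0" "(\<Sum>v\<in>X - {a}. c v *\<^sub>R v) = 0"
    using real_vector.dependent_finite[of "X - {a}"] fin by auto
  \<comment> \<open>Subtracting a multiple of the barycentric relation turns c into an affine dependence.\<close>
  define c' where "c' v = (if v = a then 0 else c v)" for v
  define t where "t = sum c (X - {a})"
  define d where "d v = c' v - t * l v" for v
  have "sum c' X = sum c' (X - {a})" "(\<Sum>v\<in>X. c' v *\<^sub>R v) = (\<Sum>v\<in>X - {a}. c' v *\<^sub>R v)"
    using fin a by (simp_all add: sum.remove c'_def)
  moreover have "sum c' (X - {a}) = t" "(\<Sum>v\<in>X - {a}. c' v *\<^sub>R v) = 0"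
    using c(2) unfolding t_def by (auto simp: c'_def intro!: trans[OF sum.cong[OF refl]])
  ultimately have c': "sum c' X = t" "(\<Sum>v\<in>X. c' v *\<^sub>R v) = 0"
    by simp_all
  have "sum d X = 0"
    using c'(1) l(2) by (simp add: d_def sum_subtractf sum_distrib_left[symmetric])
  moreover have "(\<Sum>v\<in>X. d v *\<^sub>R v) = 0"
    using c'(2) l(3)
    by (simp add: d_def scaleR_diff_left sum_subtractf flip: scaleR_scaleR scaleR_sum_right)
  ultimately have d0: "\<And>v. v \<in> X \<Longrightarrow> d v = 0"
    using affine_dependent_explicit_finite[OF fin] aff by blast
  then have "t = 0"
    using d0[OF a] l(1)[OF a] by (simp add: d_def c'_def)
  obtain v where v: "v \<in> X - {a}" "c v \<noteq> 0"
    using c(1) by blast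
  then have "d v = c v"
    using \<open>t = 0\<close> by (simp add: d_def c'_def)
  then show False
    using d0 v by simp
qed

lemma simplex_inner_bounded_below:
  fixes X :: "'a::euclidean_space set"
  assumes aff: "\<not> affine_dependent X" and zero: "0 \<in> rel_interior (convex hull X)" and u: "u \<in> X"
  obtains K where "\<And>z. (\<And>v. v \<in> X \<Longrightarrow> v \<bullet> z \<le> c) \<Longrightarrow> - K \<le> u \<bullet> z"
proof -
  have fin: "finite X"
    using aff aff_independent_finite by blast
  obtain l where l: "\<And>u. u \<in> X \<Longrightarrow> 0 < l u" "sum l X = 1" "(\<Sum>u\<in>X. l u *\<^sub>R u) = 0"
    using simplex_zero_barycentric[OF aff zero] by blast
  have "- (\<bar>c\<bar> / l u) \<le> u \<bullet> z" if le: "\<And>v. v \<in> X \<Longrightarrow> v \<bullet> z \<le> c" for z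
  proof -
    have "0 = (\<Sum>v\<in>X. l v *\<^sub>R v) \<bullet> z"
      using l(3) by simp
    also have "\<dots> = (\<Sum>v\<in>X. l v * (v \<bullet> z))"
      by (simp add: inner_sum_left)
    also have "\<dots> = l u * (u \<bullet> z) + (\<Sum>v\<in>X - {u}. l v * (v \<bullet> z))"
      using fin u by (simp add: sum.remove)
    also have "(\<Sum>v\<in>X - {u}. l v * (v \<bullet> z)) \<le> (\<Sum>v\<in>X. l v * \<bar>c\<bar>)"
    proof -
      have "(\<Sum>v\<in>X - {u}. l v * (v \<bullet> z)) \<le> (\<Sum>v\<in>X - {u}. l v * \<bar>c\<bar>)"
        using l(1) le by (intro sum_mono mult_left_mono) (auto intro: order_trans[OF _ abs_ge_self] less_imp_le)
      also have "\<dots> \<le> (\<Sum>v\<in>X. l v * \<bar>c\<bar>)"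
        using fin by (intro sum_mono2) (auto intro!: mult_nonneg_nonneg less_imp_le[OF l(1)])
      finally show ?thesis .
    qed
    also have "(\<Sum>v\<in>X. l v * \<bar>c\<bar>) = \<bar>c\<bar>"
      using l(2) by (simp add: sum_distrib_right[symmetric])
    finally have "- \<bar>c\<bar> \<le> l u * (u \<bullet> z)"
      by simp
    then show ?thesis
      using l(1)[OF u] by (simp add: field_simps)
  qed
  then show ?thesis
    using that by blast
qed

lemma simplex_ex_inner_nonpos:
  fixes X :: "'a::euclidean_space set"
  assumes aff: "\<not> affine_dependent X" and zero: "0 \<in> rel_interior (convex hull X)"
  shows "\<exists>u\<in>X. u \<bullet> z \<le> 0"
proof (rule ccontr)
  obtain l where l: "\<And>u. u \<in> X \<Longrightarrow> 0 < l u" "sum l X = 1" "(\<Sum>u\<in>X. l u *\<^sub>R u) = 0"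
    using simplex_zero_barycentric[OF aff zero] by blast
  assume "\<not> (\<exists>u\<in>X. u \<bullet> z \<le> 0)"
  then have "0 < (\<Sum>v\<in>X. l v * (v \<bullet> z))"
    using l(1,2) aff_independent_finite[OF aff] by (intro sum_pos) (auto simp: not_le)
  also have "(\<Sum>v\<in>X. l v * (v \<bullet> z)) = (\<Sum>v\<in>X. l v *\<^sub>R v) \<bullet> z"
    by (simp add: inner_sum_left)
  finally show False
    using l(3) by simp
qed

lemma independent_UN_direct_sum:
  fixes Y S :: "nat \<Rightarrow> 'a::euclidean_space set"
  assumes fin: "\<And>i. i < k \<Longrightarrow> finite (Y i)" and ind: "\<And>i. i < k \<Longrightarrow> independent (Y i)"
    and sub: "\<And>i. i < k \<Longrightarrow> Y i \<subseteq> S i"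
    and disj: "\<And>i j. i < k \<Longrightarrow> j < k \<Longrightarrow> i \<noteq> j \<Longrightarrow> Y i \<inter> Y j = {}"
    and direct: "\<And>v. (\<forall>i<k. v i \<in> span (S i)) \<Longrightarrow> (\<Sum>i<k. v i) = 0 \<Longrightarrow> \<forall>i<k. v i = 0"
  shows "independent (\<Union>i<k. Y i)"
proof
  assume "dependent (\<Union>i<k. Y i)"
  moreover have "finite (\<Union>i<k. Y i)"
    using fin by auto
  ultimately obtain c where c: "\<exists>v\<in>(\<Union>i<k. Y i). c v \<noteq> 0" "(\<Sum>v\<in>(\<Union>i<k. Y i). c v *\<^sub>R v) = 0"
    using real_vector.dependent_finite by blast
  define part where "part i = (\<Sum>v\<in>Y i. c v *\<^sub>R v)" for i
  have "part i \<in> span (S i)" if "i < k" for i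
    unfolding part_def using sub[OF that] by (intro span_sum span_scale) (auto intro: span_base)
  moreover have "(\<Sum>i<k. part i) = 0"
    using c(2) sum.UNION_disjoint[of "{..<k}" Y "\<lambda>v. c v *\<^sub>R v"] fin disj unfolding part_def by simp
  ultimately have part0: "\<forall>i<k. part i = 0"
    using direct by blast
  obtain i v where iv: "i < k" "v \<in> Y i" "c v \<noteq> 0"
    using c(1) by blast
  have "(\<Sum>v\<in>Y i. c v *\<^sub>R v) = 0"
    using part0 iv(1) unfolding part_def by blast
  then have "dependent (Y i)"
    unfolding real_vector.dependent_finite[OF fin[OF iv(1)]] using iv(2,3) by blast
  then show False
    using ind[OF iv(1)] by blast
qed

lemma independent_ex_inner_eq_one:
  fixes B :: "'a::euclidean_space set"
  assumes "independent B"
  obtains r where "\<And>u. u \<in> B \<Longrightarrow> u \<bullet> r = 1"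
proof -
  obtain g :: "'a \<Rightarrow> real" where g: "linear g" "\<And>u. u \<in> B \<Longrightarrow> g u = 1"
    using real_vector.linear_independent_extend[OF assms, of "\<lambda>_. 1"] by blast
  have "u \<bullet> adjoint g 1 = 1" if "u \<in> B" for u
    using adjoint_works[OF g(1), of u 1] g(2)[OF that] by simp
  then show ?thesis
    using that by blast
qed

lemma bounded_if_inner_bounded:
  fixes U S :: "'a::euclidean_space set"
  assumes fin: "finite U" and span: "span U = UNIV"
    and bnd: "\<And>u. u \<in> U \<Longrightarrow> \<exists>K. \<forall>z\<in>S. \<bar>u \<bullet> z\<bar> \<le> K"
  shows "bounded S"
proof -
  have "\<forall>u\<in>U. \<exists>K. \<forall>z\<in>S. \<bar>u \<bullet> z\<bar> \<le> K"
    using bnd by blast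
  from bchoice[OF this] obtain K where K: "\<forall>u\<in>U. \<forall>z\<in>S. \<bar>u \<bullet> z\<bar> \<le> K u"
    by blast
  have "surj (\<lambda>\<beta>. \<Sum>u\<in>U. \<beta> u *\<^sub>R u)"
    using span span_finite[OF fin] by simp
  then have "\<forall>b. \<exists>\<beta>. b = (\<Sum>u\<in>U. \<beta> u *\<^sub>R u)"
    unfolding surj_def by blast
  from choice[OF this] obtain \<beta> where \<beta>: "\<forall>b. b = (\<Sum>u\<in>U. \<beta> b u *\<^sub>R u)"
    by blast
  have "norm z \<le> (\<Sum>b\<in>Basis. \<Sum>u\<in>U. \<bar>\<beta> b u\<bar> * K u)" if z: "z \<in> S" for z
  proof -
    have "\<bar>z \<bullet> b\<bar> \<le> (\<Sum>u\<in>U. \<bar>\<beta> b u\<bar> * K u)" if b: "b \<in> Basis" for b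
    proof -
      have "\<bar>z \<bullet> b\<bar> = \<bar>\<Sum>u\<in>U. \<beta> b u * (u \<bullet> z)\<bar>"
        by (subst \<beta>[rule_format, of b]) (simp add: inner_sum_right inner_commute)
      also have "\<dots> \<le> (\<Sum>u\<in>U. \<bar>\<beta> b u\<bar> * K u)"
        using K z by (intro order_trans[OF sum_abs] sum_mono) (auto simp: abs_mult intro!: mult_left_mono)
      finally show ?thesis .
    qed
    then have "(\<Sum>b\<in>Basis. \<bar>z \<bullet> b\<bar>) \<le> (\<Sum>b\<in>Basis. \<Sum>u\<in>U. \<bar>\<beta> b u\<bar> * K u)"
      by (rule sum_mono)
    then show ?thesis
      using norm_le_l1[of z] by linarith
  qed
  then show ?thesis
    unfolding bounded_iff by blast
qed

lemma compact_shrinking_cover: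
  fixes A :: "real \<Rightarrow> 'a::topological_space set"
  assumes "compact K" and opn: "\<And>t. 0 < t \<Longrightarrow> open (A t)"
    and cover: "\<And>x. x \<in> K \<Longrightarrow> \<exists>t>0. x \<in> A t"
    and shrink: "\<And>x t t'. x \<in> K \<Longrightarrow> 0 < t' \<Longrightarrow> t' \<le> t \<Longrightarrow> x \<in> A t \<Longrightarrow> x \<in> A t'"
  obtains t where "0 < t" "K \<subseteq> A t"
proof -
  have "K \<subseteq> (\<Union>t\<in>{0<..}. A t)"
    using cover by fastforce
  then obtain C where C: "C \<subseteq> {0<..}" "finite C" "K \<subseteq> (\<Union>t\<in>C. A t)"
    using compactE_image[OF \<open>compact K\<close>, of "{0<..}" A] opn by auto
  show ?thesis
  proof (cases "C = {}")
    case True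
    then show ?thesis
      using that[of 1] C(3) by simp
  next
    case False
    then have "0 < Min C"
      using C by auto
    moreover have "K \<subseteq> A (Min C)"
    proof
      fix x assume "x \<in> K"
      then obtain t where "t \<in> C" "x \<in> A t"
        using C(3) by blast
      then show "x \<in> A (Min C)"
        using shrink[OF \<open>x \<in> K\<close> \<open>0 < Min C\<close> Min_le[OF C(2)]] by blast
    qed
    ultimately show ?thesis
      using that by blast
  qed
qed

lemma le_two_power_pred: "n \<le> 2 ^ (n - 1)"
  by (cases n) (simp_all add: Suc_leI)

lemma finite_superset_card_eq:
  fixes S :: "'a::euclidean_space set"
  assumes "finite S" "card S \<le> m"
  obtains V where "finite V" "card V = m" "S \<subseteq> V"
proof -
  obtain b :: 'a where "b \<in> Basis"
    using nonempty_Basis by blast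
  then have "inj (\<lambda>r::real. r *\<^sub>R b)"
    by (auto simp: inj_on_def nonzero_Basis)
  then have "infinite (range (\<lambda>r::real. r *\<^sub>R b))"
    using finite_imageD infinite_UNIV_char_0 by blast
  then have "infinite (UNIV - S)"
    using assms(1) infinite_super by (metis Diff_infinite_finite subset_UNIV)
  then obtain T where T: "finite T" "card T = m - card S" "T \<subseteq> UNIV - S"
    using infinite_arbitrarily_large by blast
  then have "card (S \<union> T) = card S + card T"
    using assms(1) by (intro card_Un_disjoint) auto
  then show ?thesis
    using that[of "S \<union> T"] T assms by auto
qed

locale simplex_decomposition =
  fixes X :: "nat \<Rightarrow> 'a::euclidean_space set" and k :: nat
  assumes affine_independent: "\<And>i. i < k \<Longrightarrow> \<not> affine_dependent (X i)"
    and zero_rel_interior: "\<And>i. i < k \<Longrightarrow> 0 \<in> rel_interior (convex hull (X i))"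
    and disjoint: "\<And>i j. i < k \<Longrightarrow> j < k \<Longrightarrow> i \<noteq> j \<Longrightarrow> X i \<inter> X j = {}"
    and direct_sum: "\<And>v. (\<forall>i<k. v i \<in> span (X i)) \<Longrightarrow> (\<Sum>i<k. v i) = 0 \<Longrightarrow> \<forall>i<k. v i = 0"
    and spanning: "\<And>y. \<exists>v. (\<forall>i<k. v i \<in> span (X i)) \<and> y = (\<Sum>i<k. v i)"
begin

definition all_vertices :: "'a set"
  where "all_vertices = (\<Union>i<k. X i)"

definition polar_body :: "'a set"
  where "polar_body = {z. \<forall>u\<in>all_vertices. u \<bullet> z \<le> 1}"

definition choices :: "(nat \<Rightarrow> 'a) set"
  where "choices = (\<Pi>\<^sub>E i\<in>{..<k}. X i)"

definition choice_basis :: "(nat \<Rightarrow> 'a) \<Rightarrow> 'a set"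
  where "choice_basis \<sigma> = (\<Union>i<k. X i - {\<sigma> i})"

definition polar_vertex :: "(nat \<Rightarrow> 'a) \<Rightarrow> 'a"
  where "polar_vertex \<sigma> = (SOME r. \<forall>u\<in>choice_basis \<sigma>. u \<bullet> r = 1)"

lemma finite_X: "i < k \<Longrightarrow> finite (X i)"
  using affine_independent aff_independent_finite by blast

lemma X_nonempty: "i < k \<Longrightarrow> X i \<noteq> {}"
  using zero_rel_interior by fastforce

lemma finite_all_vertices: "finite all_vertices"
  unfolding all_vertices_def using finite_X by blast

lemma span_all_vertices: "span all_vertices = UNIV"
proof -
  have "y \<in> span all_vertices" for y
  proof -
    obtain v where v: "\<forall>i<k. v i \<in> span (X i)" "y = (\<Sum>i<k. v i)"
      using spanning by blast
    have "span (X i) \<subseteq> span all_vertices" if "i < k" for i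
      unfolding all_vertices_def using that by (intro span_mono) blast
    then show ?thesis
      unfolding v(2) using v(1) by (intro span_sum) blast
  qed
  then show ?thesis
    by auto
qed

lemma bounded_vertex_halfspaces: "bounded {z. \<forall>u\<in>all_vertices. u \<bullet> z \<le> c u}"
proof (rule bounded_if_inner_bounded[OF finite_all_vertices span_all_vertices])
  fix u assume "u \<in> all_vertices"
  then obtain i where i: "i < k" "u \<in> X i"
    unfolding all_vertices_def by blast
  define C where "C = (\<Sum>v\<in>all_vertices. \<bar>c v\<bar>)"
  have C: "c v \<le> C" if "v \<in> all_vertices" for v
  proof -
    have "\<bar>c v\<bar> \<le> C"
      unfolding C_def by (rule member_le_sum) (use that finite_all_vertices in auto)
    then show ?thesis
      by linarith
  qed
  obtain K where K: "\<And>z. (\<And>v. v \<in> X i \<Longrightarrow> v \<bullet> z \<le> C) \<Longrightarrow> - K \<le> u \<bullet> z"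
    using simplex_inner_bounded_below[OF affine_independent[OF i(1)] zero_rel_interior[OF i(1)] i(2)]
    by blast
  have "\<bar>u \<bullet> z\<bar> \<le> max K C" if "z \<in> {z. \<forall>u\<in>all_vertices. u \<bullet> z \<le> c u}" for z
  proof -
    have "v \<bullet> z \<le> C" if "v \<in> X i" for v
    proof -
      have v: "v \<in> all_vertices"
        using i(1) that unfolding all_vertices_def by blast
      then have "v \<bullet> z \<le> c v"
        using \<open>z \<in> _\<close> by blast
      then show ?thesis
        using C[OF v] by linarith
    qed
    then have "- K \<le> u \<bullet> z" "u \<bullet> z \<le> C"
      using K[of z] i(2) by auto
    then show ?thesis
      by linarith
  qed
  then show "\<exists>K. \<forall>z\<in>{z. \<forall>u\<in>all_vertices. u \<bullet> z \<le> c u}. \<bar>u \<bullet> z\<bar> \<le> K"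
    by blast
qed

lemma zero_in_polar_body: "0 \<in> polar_body"
  unfolding polar_body_def by simp

lemma compact_polar_body: "compact polar_body"
proof -
  have "polar_body = (\<Inter>u\<in>all_vertices. {z. u \<bullet> z \<le> 1})"
    unfolding polar_body_def by auto
  then have "closed polar_body"
    by (simp add: closed_INT closed_halfspace_le)
  then show ?thesis
    using bounded_vertex_halfspaces[of "\<lambda>_. 1"]
    unfolding polar_body_def by (simp add: compact_eq_bounded_closed)
qed

lemma finite_choices: "finite choices"
  unfolding choices_def using finite_X by (intro finite_PiE) auto

lemma card_choices: "card choices = (\<Prod>i<k. card (X i))"
  unfolding choices_def by (simp add: card_PiE)

lemma choices_nonempty: "choices \<noteq> {}"
  unfolding choices_def using X_nonempty by (simp add: PiE_eq_empty_iff)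

lemma independent_choice_basis:
  assumes "\<sigma> \<in> choices"
  shows "independent (choice_basis \<sigma>)"
  unfolding choice_basis_def
proof (rule independent_UN_direct_sum[where S = X])
  fix i assume "i < k"
  then show "finite (X i - {\<sigma> i})" "X i - {\<sigma> i} \<subseteq> X i"
    using finite_X by auto
  show "independent (X i - {\<sigma> i})"
    using simplex_independent_Diff affine_independent zero_rel_interior \<open>i < k\<close> assms
    unfolding choices_def by blast
qed (use disjoint direct_sum in auto)

lemma card_choice_basis:
  assumes "\<sigma> \<in> choices"
  shows "card (choice_basis \<sigma>) = (\<Sum>i<k. card (X i) - 1)"
proof -
  have "card (choice_basis \<sigma>) = (\<Sum>i<k. card (X i - {\<sigma> i}))"
    unfolding choice_basis_def using finite_X disjoint by (intro card_UN_disjoint) auto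
  also have "\<dots> = (\<Sum>i<k. card (X i) - 1)"
    using assms finite_X unfolding choices_def by (intro sum.cong) (auto simp: PiE_iff card_Diff_singleton)
  finally show ?thesis .
qed

lemma inner_polar_vertex:
  assumes "\<sigma> \<in> choices" "u \<in> choice_basis \<sigma>"
  shows "u \<bullet> polar_vertex \<sigma> = 1"
proof -
  obtain r where "\<And>u. u \<in> choice_basis \<sigma> \<Longrightarrow> u \<bullet> r = 1"
    using independent_ex_inner_eq_one[OF independent_choice_basis[OF assms(1)]] by blast
  then have "\<exists>r. \<forall>u\<in>choice_basis \<sigma>. u \<bullet> r = 1"
    by blast
  then have "\<forall>u\<in>choice_basis \<sigma>. u \<bullet> polar_vertex \<sigma> = 1"
    unfolding polar_vertex_def by (rule someI_ex)
  then show ?thesis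
    using assms(2) by blast
qed

lemma ex_choice_inner_nonpos: "\<exists>\<sigma>\<in>choices. \<forall>i<k. \<sigma> i \<bullet> z \<le> 0"
proof -
  have "\<forall>i\<in>{..<k}. \<exists>u\<in>X i. u \<bullet> z \<le> 0"
    using simplex_ex_inner_nonpos affine_independent zero_rel_interior by blast
  then have "\<forall>i\<in>{..<k}. \<exists>u. u \<in> X i \<and> u \<bullet> z \<le> 0"
    by blast
  from bchoice[OF this] obtain \<sigma> where "\<forall>i\<in>{..<k}. \<sigma> i \<in> X i \<and> \<sigma> i \<bullet> z \<le> 0"
    by blast
  then show ?thesis
    unfolding choices_def by (intro bexI[of _ "restrict \<sigma> {..<k}"]) auto
qed

lemma prod_card_le_two_power: "(\<Prod>i<k. card (X i)) \<le> 2 ^ DIM('a)"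
proof -
  obtain \<sigma> where \<sigma>: "\<sigma> \<in> choices"
    using choices_nonempty by blast
  have "(\<Sum>i<k. card (X i) - 1) \<le> dim (choice_basis \<sigma>)"
    using independent_bound_general[OF independent_choice_basis[OF \<sigma>]] card_choice_basis[OF \<sigma>]
    by simp
  also have "\<dots> \<le> DIM('a)"
    by (rule dim_subset_UNIV)
  finally have sum_le: "(\<Sum>i<k. card (X i) - 1) \<le> DIM('a)" .
  have "(\<Prod>i<k. card (X i)) \<le> (\<Prod>i<k. 2 ^ (card (X i) - 1))"
    by (intro prod_mono) (use le_two_power_pred in auto)
  also have "\<dots> = 2 ^ (\<Sum>i<k. card (X i) - 1)"
    by (simp add: power_sum)
  also have "\<dots> \<le> 2 ^ DIM('a)"
    using sum_le by (intro power_increasing) auto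
  finally show ?thesis .
qed

lemma inner_polar_vertex_shift_le:
  assumes \<sigma>: "\<sigma> \<in> choices" and nonpos: "\<And>i. i < k \<Longrightarrow> \<sigma> i \<bullet> z \<le> 0"
    and unit: "\<And>u. u \<in> all_vertices \<Longrightarrow> norm u \<le> 1"
    and near: "\<And>u. u \<in> all_vertices \<Longrightarrow> u \<bullet> z \<le> 1 + \<delta>" and "0 \<le> \<delta>"
    and \<epsilon>: "0 < \<epsilon>" "\<epsilon> \<le> 1" "\<epsilon> * norm (polar_vertex \<sigma>) \<le> 1"
    and u: "u \<in> all_vertices"
  shows "u \<bullet> ((1 + \<epsilon>) *\<^sub>R z - \<epsilon> *\<^sub>R polar_vertex \<sigma>) \<le> 1 + 2 * \<delta>"
proof -
  define r where "r = polar_vertex \<sigma>"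
  obtain i where i: "i < k" "u \<in> X i"
    using u unfolding all_vertices_def by blast
  have "u \<bullet> ((1 + \<epsilon>) *\<^sub>R z - \<epsilon> *\<^sub>R r) = (1 + \<epsilon>) * (u \<bullet> z) - \<epsilon> * (u \<bullet> r)"
    by (simp add: inner_diff_right)
  also have "\<dots> \<le> 1 + 2 * \<delta>"
  proof (cases "u = \<sigma> i")
    case True
    have "- (u \<bullet> r) \<le> norm r"
      using Cauchy_Schwarz_ineq2[of u r] unit[OF u] mult_right_mono[of "norm u" 1 "norm r"] by auto
    then have "- (\<epsilon> * (u \<bullet> r)) \<le> 1"
      using \<epsilon> mult_left_mono[of "- (u \<bullet> r)" "norm r" \<epsilon>] unfolding r_def by auto
    moreover have "(1 + \<epsilon>) * (u \<bullet> z) \<le> 0"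
      using nonpos[OF i(1)] True \<epsilon>(1) by (simp add: mult_nonneg_nonpos)
    ultimately show ?thesis
      using \<open>0 \<le> \<delta>\<close> by linarith
  next
    case False
    then have "u \<bullet> r = 1"
      using inner_polar_vertex[OF \<sigma>] i unfolding r_def choice_basis_def by blast
    moreover have "(1 + \<epsilon>) * (u \<bullet> z) \<le> (1 + \<epsilon>) * (1 + \<delta>)"
      using near[OF u] \<epsilon>(1) by (intro mult_left_mono) auto
    moreover have "\<epsilon> * \<delta> \<le> \<delta>"
      using mult_right_mono[OF \<epsilon>(2) \<open>0 \<le> \<delta>\<close>] by simp
    ultimately show ?thesis
      by (simp add: algebra_simps)
  qed
  finally show ?thesis
    unfolding r_def .
qed

text \<open>z is a convex combination of polar_vertex \<sigma> and (1 + \<epsilon>) z - \<epsilon> polar_vertex \<sigma>, a point of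
  a slightly enlarged polar body; so if z (almost) lies on the face of the polar body exposed
  by w, then so does polar_vertex \<sigma>.\<close>

lemma polar_vertex_near_face:
  assumes \<sigma>: "\<sigma> \<in> choices" and nonpos: "\<And>i. i < k \<Longrightarrow> \<sigma> i \<bullet> z \<le> 0"
    and unit: "\<And>u. u \<in> all_vertices \<Longrightarrow> norm u \<le> 1"
    and near: "\<And>u. u \<in> all_vertices \<Longrightarrow> u \<bullet> z \<le> 1 + \<delta>" and "0 \<le> \<delta>" and "4 * \<delta> \<le> \<epsilon>"
    and \<epsilon>: "0 < \<epsilon>" "\<epsilon> \<le> 1" "\<epsilon> * norm (polar_vertex \<sigma>) \<le> 1"
    and face: "support_fun polar_body w \<le> w \<bullet> z"
  shows "support_fun polar_body w \<le> 2 * (w \<bullet> polar_vertex \<sigma>)"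
proof -
  let ?hR = "support_fun polar_body w"
  define z' where "z' = (1 + \<epsilon>) *\<^sub>R z - \<epsilon> *\<^sub>R polar_vertex \<sigma>"
  have "u \<bullet> z' \<le> 1 + 2 * \<delta>" if "u \<in> all_vertices" for u
    unfolding z'_def by (rule inner_polar_vertex_shift_le[OF \<sigma> nonpos unit near \<open>0 \<le> \<delta>\<close> \<epsilon> that])
  then have "(1 / (1 + 2 * \<delta>)) *\<^sub>R z' \<in> polar_body"
    unfolding polar_body_def using \<open>0 \<le> \<delta>\<close> by (simp add: divide_le_eq)
  then have "w \<bullet> ((1 / (1 + 2 * \<delta>)) *\<^sub>R z') \<le> ?hR"
    by (rule support_fun_upper[OF compact_imp_bounded[OF compact_polar_body]])
  then have "w \<bullet> z' \<le> (1 + 2 * \<delta>) * ?hR"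
    using \<open>0 \<le> \<delta>\<close> by (simp add: divide_le_eq mult.commute)
  moreover have "\<epsilon> * (w \<bullet> polar_vertex \<sigma>) = (1 + \<epsilon>) * (w \<bullet> z) - w \<bullet> z'"
    unfolding z'_def by (simp add: inner_diff_right)
  moreover have "(1 + \<epsilon>) * ?hR \<le> (1 + \<epsilon>) * (w \<bullet> z)"
    using face \<epsilon>(1) by (intro mult_left_mono) auto
  ultimately have "(\<epsilon> - 2 * \<delta>) * ?hR \<le> \<epsilon> * (w \<bullet> polar_vertex \<sigma>)"
    by (simp add: algebra_simps)
  moreover have "\<epsilon> / 2 * ?hR \<le> (\<epsilon> - 2 * \<delta>) * ?hR"
    using support_fun_upper[OF compact_imp_bounded[OF compact_polar_body] zero_in_polar_body, of w]
      \<open>4 * \<delta> \<le> \<epsilon>\<close> by (intro mult_right_mono) auto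
  ultimately have "\<epsilon> * ?hR \<le> \<epsilon> * (2 * (w \<bullet> polar_vertex \<sigma>))"
    by (simp add: algebra_simps)
  then show ?thesis
    using \<epsilon>(1) by simp
qed

end

locale monotypic_simplex_decomposition = simplex_decomposition X k
  for X :: "nat \<Rightarrow> 'a::euclidean_space set" and k +
  fixes P :: "'a set"
  assumes full_dim: "aff_dim P = int DIM('a)"
    and monotypic: "strongly_monotypic P"
    and X_facet_normals: "\<And>i. i < k \<Longrightarrow> X i \<subseteq> facet_normals P"
begin

lemma polytope_P: "polytope P"
  using monotypic unfolding strongly_monotypic_def by blast

lemma bounded_P: "bounded P"
  by (rule polytope_imp_bounded[OF polytope_P])

lemma P_eq_facet_halfspaces: "P = {y. \<forall>w\<in>facet_normals P. w \<bullet> y \<le> support_fun P w}"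
  by (rule polytope_eq_facet_halfspaces[OF polytope_P full_dim])

lemma all_vertices_facet_normals: "all_vertices \<subseteq> facet_normals P"
  unfolding all_vertices_def using X_facet_normals by blast

lemma support_polar_body_ge_half:
  assumes "norm w = 1"
  shows "1/2 \<le> support_fun polar_body w"
proof -
  have "u \<bullet> w \<le> 1" if "u \<in> all_vertices" for u
    using norm_cauchy_schwarz[of u w] assms norm_facet_normal[of u P] all_vertices_facet_normals that
    by auto
  then have "u \<bullet> ((1/2) *\<^sub>R w) \<le> 1" if "u \<in> all_vertices" for u
    using that by fastforce
  then have "(1/2) *\<^sub>R w \<in> polar_body"
    unfolding polar_body_def by blast
  then have "w \<bullet> ((1/2) *\<^sub>R w) \<le> support_fun polar_body w"
    by (rule support_fun_upper[OF compact_imp_bounded[OF compact_polar_body]])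
  then show ?thesis
    using assms by (simp add: norm_eq_1)
qed

lemma bounded_enlargement:
  "bounded {y. \<forall>w\<in>facet_normals P. w \<bullet> y \<le> support_fun P w + s * support_fun polar_body w}"
proof (rule bounded_subset[OF bounded_vertex_halfspaces])
  show "{y. \<forall>w\<in>facet_normals P. w \<bullet> y \<le> support_fun P w + s * support_fun polar_body w} \<subseteq>
      {y. \<forall>u\<in>all_vertices. u \<bullet> y \<le> support_fun P u + s * support_fun polar_body u}"
    using all_vertices_facet_normals by blast
qed

text \<open>The polytope {y. \<forall>w\<in>facet_normals P. w \<bullet> y \<le> support_fun P w + s * support_fun polar_body w},
  i.e. P + s polar_body, has the same facet normals as P; strong monotypy lets us realise
  the sign vector of x in its arrangement by a point y, and z = (y - x) / s is the witness.\<close>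

lemma near_polar_face_point:
  assumes x: "x \<in> P" and "0 < s"
  obtains z where
    "\<And>w. w \<in> facet_normals P \<Longrightarrow> w \<bullet> x = support_fun P w \<Longrightarrow> support_fun polar_body w \<le> w \<bullet> z"
    "\<And>u. u \<in> all_vertices \<Longrightarrow> u \<bullet> z \<le> 1 + (support_fun P u - u \<bullet> x) / s"
proof -
  let ?N = "facet_normals P" and ?h = "support_fun P" and ?hR = "support_fun polar_body"
  define Q where "Q = {y. \<forall>w\<in>?N. w \<bullet> y \<le> ?h w + s * ?hR w}"
  have "polar_body \<noteq> {}" "0 \<le> s"
    using zero_in_polar_body \<open>0 < s\<close> by auto
  note Q = facet_normals_enlargement[OF polytope_P full_dim compact_polar_body this
      bounded_enlargement, folded Q_def]
  obtain y where y: "\<And>w. w \<in> ?N \<Longrightarrow> sgn (w \<bullet> y - support_fun Q w) = sgn (w \<bullet> x - ?h w)"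
    using strongly_monotypic_same_signs[where x=x, OF monotypic Q(1,2)] by blast
  define z where "z = (1 / s) *\<^sub>R (y - x)"
  have z: "w \<bullet> z = (w \<bullet> y - w \<bullet> x) / s" for w
    unfolding z_def by (simp add: inner_diff_right)
  have "?hR w \<le> w \<bullet> z" if w: "w \<in> ?N" and active: "w \<bullet> x = ?h w" for w
  proof -
    have "w \<bullet> y = ?h w + s * ?hR w"
      using y[OF w] active Q(3)[OF w] by (simp add: sgn_0_0)
    then show ?thesis
      using z[of w] active \<open>0 < s\<close> by simp
  qed
  moreover have "u \<bullet> z \<le> 1 + (?h u - u \<bullet> x) / s" if u: "u \<in> all_vertices" for u
  proof -
    have uN: "u \<in> ?N"
      using u all_vertices_facet_normals by blast
    have "sgn (u \<bullet> y - support_fun Q u) \<le> 0"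
      using y[OF uN] support_fun_upper[OF bounded_P x, of u] by simp
    moreover have "?hR u \<le> 1"
      by (rule support_fun_least[OF \<open>polar_body \<noteq> {}\<close>]) (use u in \<open>auto simp: polar_body_def\<close>)
    then have "s * ?hR u \<le> s"
      using mult_left_mono[of "?hR u" 1 s] \<open>0 < s\<close> by simp
    ultimately have "u \<bullet> y - u \<bullet> x \<le> s + (?h u - u \<bullet> x)"
      using Q(3)[OF uN] by simp
    then have "(u \<bullet> y - u \<bullet> x) / s \<le> (s + (?h u - u \<bullet> x)) / s"
      using \<open>0 < s\<close> by (simp add: divide_right_mono)
    then show ?thesis
      using z[of u] \<open>0 < s\<close> by (simp add: add_divide_distrib)
  qed
  ultimately show ?thesis
    using that by blast
qed

lemma illuminating_choice:
  assumes x: "x \<in> P"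
  obtains \<sigma> where "\<sigma> \<in> choices"
    "\<And>w. w \<in> facet_normals P \<Longrightarrow> w \<bullet> x = support_fun P w \<Longrightarrow> 1/4 \<le> w \<bullet> polar_vertex \<sigma>"
proof -
  let ?h = "support_fun P" and ?hR = "support_fun polar_body"
  have slack: "0 \<le> ?h u - u \<bullet> x" for u
    using support_fun_upper[OF bounded_P x, of u] by simp
  define D where "D = 1 + (\<Sum>u\<in>all_vertices. ?h u - u \<bullet> x)"
  have D: "?h u - u \<bullet> x \<le> D" if "u \<in> all_vertices" for u
    unfolding D_def using member_le_sum[OF that _ finite_all_vertices, of "\<lambda>u. ?h u - u \<bullet> x"] slack
    by force
  have "1 \<le> D"
    unfolding D_def using slack by (simp add: sum_nonneg)
  define \<rho> where "\<rho> = 1 + (\<Sum>\<sigma>\<in>choices. norm (polar_vertex \<sigma>))"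
  have \<rho>: "norm (polar_vertex \<sigma>) \<le> \<rho> - 1" if "\<sigma> \<in> choices" for \<sigma>
    unfolding \<rho>_def using finite_choices that by (auto intro: member_le_sum)
  have "1 \<le> \<rho>"
    unfolding \<rho>_def by (simp add: sum_nonneg)
  define s where "s = 4 * D * \<rho>"
  have "0 < s"
    unfolding s_def using \<open>1 \<le> D\<close> \<open>1 \<le> \<rho>\<close> by simp
  obtain z where z_face: "\<And>w. w \<in> facet_normals P \<Longrightarrow> w \<bullet> x = ?h w \<Longrightarrow> ?hR w \<le> w \<bullet> z"
    and z_near': "\<And>u. u \<in> all_vertices \<Longrightarrow> u \<bullet> z \<le> 1 + (?h u - u \<bullet> x) / s"
    using near_polar_face_point[OF x \<open>0 < s\<close>] by blast
  have z_near: "u \<bullet> z \<le> 1 + D / s" if "u \<in> all_vertices" for u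
    using z_near'[OF that] divide_right_mono[OF D[OF that], of s] \<open>0 < s\<close> by simp
  obtain \<sigma> where \<sigma>: "\<sigma> \<in> choices" "\<And>i. i < k \<Longrightarrow> \<sigma> i \<bullet> z \<le> 0"
    using ex_choice_inner_nonpos by blast
  have unit: "norm u \<le> 1" if "u \<in> all_vertices" for u
    using that all_vertices_facet_normals norm_facet_normal by fastforce
  have "4 * (D / s) \<le> 1 / \<rho>"
    unfolding s_def using \<open>1 \<le> D\<close> \<open>1 \<le> \<rho>\<close> by (simp add: field_simps)
  moreover have "1 / \<rho> * norm (polar_vertex \<sigma>) \<le> 1"
    using \<rho>[OF \<sigma>(1)] \<open>1 \<le> \<rho>\<close> by (simp add: field_simps)
  ultimately have "?hR w \<le> 2 * (w \<bullet> polar_vertex \<sigma>)"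
    if w: "w \<in> facet_normals P" and active: "w \<bullet> x = ?h w" for w
    using \<open>1 \<le> \<rho>\<close> \<open>1 \<le> D\<close> \<open>0 < s\<close>
    by (intro polar_vertex_near_face[where \<epsilon>="1 / \<rho>", OF \<sigma> unit z_near _ _ _ _ _ z_face[OF w active]])
      auto
  moreover have "1/2 \<le> ?hR w" if "w \<in> facet_normals P" for w
    using support_polar_body_ge_half norm_facet_normal that by blast
  ultimately show ?thesis
    using that \<sigma>(1) by fastforce
qed

text \<open>The margin t / 8 is half of what illuminating_choice provides on the active facets; the
  rest leaves room for shrinking P in the covering.\<close>

definition deep_inside :: "real \<Rightarrow> (nat \<Rightarrow> 'a) \<Rightarrow> 'a \<Rightarrow> bool"
  where "deep_inside t \<sigma> x \<longleftrightarrow>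
    (\<forall>w\<in>facet_normals P. w \<bullet> (x - t *\<^sub>R polar_vertex \<sigma>) < support_fun P w - t / 8)"

lemma deep_inside_iff:
  "deep_inside t \<sigma> x \<longleftrightarrow>
    (\<forall>w\<in>facet_normals P. w \<bullet> x < support_fun P w - t / 8 + t * (w \<bullet> polar_vertex \<sigma>))"
  unfolding deep_inside_def by (auto simp: inner_diff_right)

lemma open_deep_inside: "open {x. \<exists>\<sigma>\<in>choices. deep_inside t \<sigma> x}"
proof -
  have "{x. \<exists>\<sigma>\<in>choices. deep_inside t \<sigma> x} = (\<Union>\<sigma>\<in>choices. \<Inter>w\<in>facet_normals P.
      {x. w \<bullet> x < support_fun P w - t / 8 + t * (w \<bullet> polar_vertex \<sigma>)})"
    unfolding deep_inside_iff by blast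
  then show ?thesis
    using finite_facet_normals[OF polytope_P full_dim]
    by (auto intro!: open_UN open_INT simp: open_halfspace_lt)
qed

lemma eventually_deep_inside:
  assumes x: "x \<in> P"
  obtains \<sigma> where "\<sigma> \<in> choices" "\<forall>\<^sub>F t in at_right 0. deep_inside t \<sigma> x"
proof -
  let ?h = "support_fun P" and ?r = polar_vertex
  obtain \<sigma> where \<sigma>: "\<sigma> \<in> choices"
    "\<And>w. w \<in> facet_normals P \<Longrightarrow> w \<bullet> x = ?h w \<Longrightarrow> 1/4 \<le> w \<bullet> ?r \<sigma>"
    using illuminating_choice[OF x] by blast
  have "\<forall>\<^sub>F t in at_right 0. w \<bullet> (x - t *\<^sub>R ?r \<sigma>) < ?h w - t / 8"
    if w: "w \<in> facet_normals P" for w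
  proof (cases "w \<bullet> x = ?h w")
    case True
    show ?thesis
      using eventually_at_right_less[of 0]
    proof (rule eventually_mono)
      fix t :: real assume "0 < t"
      then have "t / 4 \<le> t * (w \<bullet> ?r \<sigma>)"
        using \<sigma>(2)[OF w True] by (simp add: mult_left_mono[of "1/4", simplified])
      then show "w \<bullet> (x - t *\<^sub>R ?r \<sigma>) < ?h w - t / 8"
        using True \<open>0 < t\<close> by (simp add: inner_diff_right)
    qed
  next
    case False
    then have "w \<bullet> x < ?h w"
      using support_fun_upper[OF bounded_P x, of w] by simp
    moreover have "((\<lambda>t. w \<bullet> (x - t *\<^sub>R ?r \<sigma>) + t / 8) \<longlongrightarrow> w \<bullet> x) (at_right 0)"
      by (rule tendsto_eq_intros refl | simp)+
    ultimately have "\<forall>\<^sub>F t in at_right 0. w \<bullet> (x - t *\<^sub>R ?r \<sigma>) + t / 8 < ?h w"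
      by (rule order_tendstoD(2)[rotated])
    then show ?thesis
      by (rule eventually_mono) simp
  qed
  then have "\<forall>\<^sub>F t in at_right 0. deep_inside t \<sigma> x"
    unfolding deep_inside_def using finite_facet_normals[OF polytope_P full_dim]
    by (intro eventually_ball_finite) auto
  then show ?thesis
    using that \<sigma>(1) by blast
qed

lemma deep_inside_mono:
  assumes "x \<in> P" "0 < t'" "t' \<le> t" "deep_inside t \<sigma> x"
  shows "deep_inside t' \<sigma> x"
  unfolding deep_inside_def
proof
  fix w assume w: "w \<in> facet_normals P"
  \<comment> \<open>The constraint is affine in t and holds at t = 0, so it persists for smaller t.\<close>
  define p where "p = w \<bullet> x - support_fun P w"
  define a where "a = w \<bullet> polar_vertex \<sigma> - 1/8"
  have "p \<le> 0"
    unfolding p_def using support_fun_upper[OF bounded_P \<open>x \<in> P\<close>, of w] by simp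
  moreover have "p - t * a < 0"
    using assms(4) w unfolding deep_inside_iff p_def a_def by (auto simp: right_diff_distrib)
  ultimately have "p - t' * a < 0"
  proof (cases "a \<le> 0")
    case True
    then have "t * a \<le> t' * a"
      by (rule mult_right_mono_neg[OF \<open>t' \<le> t\<close>])
    then show ?thesis
      using \<open>p - t * a < 0\<close> by linarith
  next
    case False
    then have "0 < t' * a"
      using \<open>0 < t'\<close> by simp
    then show ?thesis
      using \<open>p \<le> 0\<close> by linarith
  qed
  then show "w \<bullet> (x - t' *\<^sub>R polar_vertex \<sigma>) < support_fun P w - t' / 8"
    unfolding p_def a_def by (simp add: inner_diff_right right_diff_distrib)
qed

lemma uniform_deep_inside:
  obtains t where "0 < t" "\<And>x. x \<in> P \<Longrightarrow> \<exists>\<sigma>\<in>choices. deep_inside t \<sigma> x"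
proof -
  have "\<exists>t>0. x \<in> {x. \<exists>\<sigma>\<in>choices. deep_inside t \<sigma> x}" if x: "x \<in> P" for x
  proof -
    obtain \<sigma> where "\<sigma> \<in> choices" "\<forall>\<^sub>F t in at_right 0. deep_inside t \<sigma> x"
      using eventually_deep_inside[OF x] by blast
    then have "\<forall>\<^sub>F t in at_right 0. 0 < t \<and> deep_inside t \<sigma> x"
      using eventually_at_right_less[of 0] by (intro eventually_conj)
    then show ?thesis
      using \<open>\<sigma> \<in> choices\<close> eventually_happens'[OF trivial_limit_at_right_real] by blast
  qed
  moreover have "x \<in> {x. \<exists>\<sigma>\<in>choices. deep_inside t' \<sigma> x}"
    if "x \<in> P" "0 < t'" "t' \<le> t" "x \<in> {x. \<exists>\<sigma>\<in>choices. deep_inside t \<sigma> x}" for x t t'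
    using deep_inside_mono[OF that(1-3)] that(4) by blast
  ultimately obtain t where "0 < t" "P \<subseteq> {x. \<exists>\<sigma>\<in>choices. deep_inside t \<sigma> x}"
    by (rule compact_shrinking_cover[OF polytope_imp_compact[OF polytope_P] open_deep_inside])
  then show ?thesis
    using that by blast
qed

lemma deep_inside_interior:
  assumes "0 < t" "deep_inside t \<sigma> x"
  shows "x - t *\<^sub>R polar_vertex \<sigma> \<in> interior P"
proof -
  let ?S = "\<Inter>w\<in>facet_normals P. {y. w \<bullet> y < support_fun P w}"
  have "open ?S"
    using finite_facet_normals[OF polytope_P full_dim] by (auto simp: open_halfspace_lt)
  moreover have "?S \<subseteq> P"
    by (subst P_eq_facet_halfspaces) (auto intro: less_imp_le)
  moreover have "x - t *\<^sub>R polar_vertex \<sigma> \<in> ?S"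
    using assms unfolding deep_inside_def by fastforce
  ultimately show ?thesis
    using interior_maximal by blast
qed

lemma deep_inside_shrunk:
  assumes "\<epsilon> < 1" "\<And>w. w \<in> facet_normals P \<Longrightarrow> \<epsilon> * support_fun P w \<le> t / 8"
    and "deep_inside t \<sigma> x"
  shows "(1 / (1 - \<epsilon>)) *\<^sub>R (x - t *\<^sub>R polar_vertex \<sigma>) \<in> P"
proof -
  have "w \<bullet> ((1 / (1 - \<epsilon>)) *\<^sub>R (x - t *\<^sub>R polar_vertex \<sigma>)) \<le> support_fun P w"
    if w: "w \<in> facet_normals P" for w
  proof -
    have "w \<bullet> (x - t *\<^sub>R polar_vertex \<sigma>) \<le> (1 - \<epsilon>) * support_fun P w"
      using assms(2)[OF w] assms(3) w unfolding deep_inside_def by (auto simp: algebra_simps)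
    then show ?thesis
      using assms(1) by (simp add: pos_divide_le_eq mult.commute)
  qed
  then show ?thesis
    by (subst P_eq_facet_halfspaces) blast
qed

lemma illumination:
  "\<exists>V. finite V \<and> card V = (\<Prod>i<k. card (X i)) \<and> (\<forall>x\<in>frontier P. \<exists>v\<in>V. x - v \<in> interior P)"
proof -
  obtain t where t: "0 < t" "\<And>x. x \<in> P \<Longrightarrow> \<exists>\<sigma>\<in>choices. deep_inside t \<sigma> x"
    using uniform_deep_inside by blast
  define V0 where "V0 = (\<lambda>\<sigma>. t *\<^sub>R polar_vertex \<sigma>) ` choices"
  have "finite V0" "card V0 \<le> (\<Prod>i<k. card (X i))"
    unfolding V0_def using card_image_le[OF finite_choices] card_choices finite_choices by auto
  then obtain V where V: "finite V" "card V = (\<Prod>i<k. card (X i))" "V0 \<subseteq> V"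
    by (rule finite_superset_card_eq)
  have "\<exists>v\<in>V. x - v \<in> interior P" if "x \<in> frontier P" for x
  proof -
    have "x \<in> P"
      using that frontier_subset_closed[OF polytope_imp_closed[OF polytope_P]] by blast
    then obtain \<sigma> where "\<sigma> \<in> choices" "deep_inside t \<sigma> x"
      using t(2) by blast
    then show ?thesis
      using deep_inside_interior[OF t(1)] V(3) unfolding V0_def by blast
  qed
  then show ?thesis
    using V(1,2) by blast
qed

lemma covering:
  "\<exists>\<epsilon>>0. \<exists>T. finite T \<and> card T \<le> 2 ^ DIM('a) \<and> P \<subseteq> (\<Union>t\<in>T. (\<lambda>x. t + (1 - \<epsilon>) *\<^sub>R x) ` P)"
proof -
  let ?h = "support_fun P"
  obtain t where t: "0 < t" "\<And>x. x \<in> P \<Longrightarrow> \<exists>\<sigma>\<in>choices. deep_inside t \<sigma> x"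
    using uniform_deep_inside by blast
  define T where "T = (\<lambda>\<sigma>. t *\<^sub>R polar_vertex \<sigma>) ` choices"
  define M where "M = t + (\<Sum>w\<in>facet_normals P. \<bar>?h w\<bar>)"
  define \<epsilon> where "\<epsilon> = t / (8 * M)"
  have M: "\<bar>?h w\<bar> \<le> M - t" if "w \<in> facet_normals P" for w
    unfolding M_def using finite_facet_normals[OF polytope_P full_dim] that
    by (auto intro: member_le_sum)
  have "t \<le> M"
    unfolding M_def by (simp add: sum_nonneg)
  then have "0 < \<epsilon>" "\<epsilon> < 1"
    unfolding \<epsilon>_def using \<open>0 < t\<close> by (simp_all add: divide_less_eq)
  have \<epsilon>h: "\<epsilon> * ?h w \<le> t / 8" if "w \<in> facet_normals P" for w
  proof -
    have "\<epsilon> * ?h w \<le> \<epsilon> * M"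
      using M[OF that] \<open>0 < \<epsilon>\<close> \<open>0 < t\<close> by (intro mult_left_mono) auto
    also have "\<dots> = t / 8"
      unfolding \<epsilon>_def using \<open>0 < t\<close> \<open>t \<le> M\<close> by simp
    finally show ?thesis .
  qed
  have "P \<subseteq> (\<Union>v\<in>T. (\<lambda>x. v + (1 - \<epsilon>) *\<^sub>R x) ` P)"
  proof
    fix x assume "x \<in> P"
    then obtain \<sigma> where \<sigma>: "\<sigma> \<in> choices" "deep_inside t \<sigma> x"
      using t(2) by blast
    define p where "p = (1 / (1 - \<epsilon>)) *\<^sub>R (x - t *\<^sub>R polar_vertex \<sigma>)"
    have "p \<in> P"
      unfolding p_def using deep_inside_shrunk[OF \<open>\<epsilon> < 1\<close> \<epsilon>h \<sigma>(2)] .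
    moreover have "x = t *\<^sub>R polar_vertex \<sigma> + (1 - \<epsilon>) *\<^sub>R p"
      unfolding p_def using \<open>\<epsilon> < 1\<close> by simp
    ultimately show "x \<in> (\<Union>v\<in>T. (\<lambda>x. v + (1 - \<epsilon>) *\<^sub>R x) ` P)"
      unfolding T_def using \<sigma>(1) by blast
  qed
  moreover have "finite T" "card T \<le> 2 ^ DIM('a)"
    unfolding T_def using finite_choices card_image_le[OF finite_choices] card_choices
      prod_card_le_two_power by (auto intro: order_trans)
  ultimately show ?thesis
    using \<open>0 < \<epsilon>\<close> by blast
qed

end

theorem theorem4:
  fixes P :: "'a::euclidean_space set"
    and X :: "nat \<Rightarrow> 'a set"
    and k :: nat
  assumes "polytope P"
    and "aff_dim P = int DIM('a)"
    and "strongly_monotypic P"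
    and "\<forall>i<k. X i \<subseteq> facet_normals P"
    and "\<forall>i<k. \<forall>j<k. i \<noteq> j \<longrightarrow> X i \<inter> X j = {}"
    and "\<forall>i<k. finite (X i) \<and> \<not> affine_dependent (X i) \<and> 0 \<in> rel_interior (convex hull (X i))"
    and "\<forall>v. (\<forall>i<k. v i \<in> span (X i)) \<and> (\<Sum>i<k. v i) = 0 \<longrightarrow> (\<forall>i<k. v i = 0)"
    and "\<forall>y. \<exists>v. (\<forall>i<k. v i \<in> span (X i)) \<and> y = (\<Sum>i<k. v i)"
  shows "(\<exists>V. finite V \<and> card V = (\<Prod>i<k. card (X i)) \<and>
            (\<forall>x\<in>frontier P. \<exists>v\<in>V. x - v \<in> interior P))
       \<and> (\<Prod>i<k. card (X i)) \<le> 2 ^ DIM('a)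
       \<and> (\<exists>\<epsilon>>0. \<exists>T. finite T \<and> card T \<le> 2 ^ DIM('a) \<and>
            P \<subseteq> (\<Union>t\<in>T. (\<lambda>x. t + (1 - \<epsilon>) *\<^sub>R x) ` P))"
proof -
  interpret monotypic_simplex_decomposition X k P
    by unfold_locales (use assms(2-8) in auto)
  show ?thesis
    using illumination prod_card_le_two_power covering by blast
qed

end
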